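(* Let $R$ be a commutative ring, $n\ge 1$, and $I$ an $n$-absorbing ideal of $R$. If $I_1,\dots,I_{n+1}$ are u-ideals of $R$ with $I_1I_2\cdots I_{n+1}\subseteq I$, then $I$ contains the product of some $n$ of the ideals $I_1,\dots,I_{n+1}$.
   Context: All rings are commutative with identity $1\neq 0$. An ideal $I$ of $R$ is $n$-absorbing if whenever $x_1,\dots,x_{n+1}\in R$ and $x_1x_2\cdots x_{n+1}\in I$, the product of some $n$ of the $x_i$'s lies in $I$. An ideal $J$ of $R$ is a u-ideal if whenever $J\subseteq J_1\cup\cdots\cup J_m$ for finitely many ideals $J_1,\dots,J_m$ of $R$, then $J\subseteq J_i$ for some $i$. *)

theory Defs
  imports "HOL-Algebra.Algebra"
begin

fun ideal_prod_list :: "('a, 'b) ring_scheme \<Rightarrow> 'a set list \<Rightarrow> 'a set" where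
  "ideal_prod_list R [] = carrier R"
| "ideal_prod_list R (J # Js) = J \<cdot>\<^bsub>R\<^esub> ideal_prod_list R Js"

definition n_absorbing :: "('a, 'b) ring_scheme \<Rightarrow> nat \<Rightarrow> 'a set \<Rightarrow> bool" where
  "n_absorbing R n I \<longleftrightarrow> ideal I R \<and>
     (\<forall>x :: nat \<Rightarrow> 'a. (\<forall>i<Suc n. x i \<in> carrier R) \<and> finprod R x {..<Suc n} \<in> I \<longrightarrow>
        (\<exists>j<Suc n. finprod R x ({..<Suc n} - {j}) \<in> I))"

definition u_ideal :: "('a, 'b) ring_scheme \<Rightarrow> 'a set \<Rightarrow> bool" where
  "u_ideal R J \<longleftrightarrow> ideal J R \<and>
     (\<forall>F. finite F \<and> (\<forall>K\<in>F. ideal K R) \<and> J \<subseteq> \<Union>F \<longrightarrow> (\<exists>K\<in>F. J \<subseteq> K))"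

end

theory Submission
  imports Defs
begin

text \<open>
  Call \<open>finprods R S T\<close> the set of products \<open>\<Prod>i\<in>T. s\<^sub>i\<close> with \<open>s\<^sub>i \<in> S i\<close>; an ideal contains
  a product of ideals iff it contains these elementwise products. The n-absorbing property is the
  case where every \<open>S i\<close> is a singleton, and the singletons are replaced by the u-ideals one at a
  time. In the replacement step, for each \<open>a\<close> in the u-ideal \<open>S k\<close> the family with \<open>S k := {a}\<close>
  admits a droppable index \<open>j\<close>; unless \<open>j = k\<close> works for all of \<open>S k\<close> at once, this puts \<open>a\<close>
  into the colon ideal of \<open>I\<close> by the products omitting \<open>j\<close> and \<open>k\<close>. These finitely many colon
  ideals cover \<open>S k\<close>, so \<open>S k\<close> lies in one of them, and that \<open>j\<close> works uniformly.
\<close>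

definition finprods :: "('a, 'b) ring_scheme \<Rightarrow> ('c \<Rightarrow> 'a set) \<Rightarrow> 'c set \<Rightarrow> 'a set" where
  "finprods R S T = {finprod R y T | y. \<forall>i\<in>T. y i \<in> S i}"

definition ideal_colon :: "('a, 'b) ring_scheme \<Rightarrow> 'a set \<Rightarrow> 'a set \<Rightarrow> 'a set" where
  "ideal_colon R I B = {r \<in> carrier R. \<forall>b\<in>B. r \<otimes>\<^bsub>R\<^esub> b \<in> I}"

context cring begin

lemma ideal_colon_ideal:
  assumes "ideal I R" "B \<subseteq> carrier R"
  shows "ideal (ideal_colon R I B) R"
proof (rule idealI)
  show "subgroup (ideal_colon R I B) (add_monoid R)"
  proof (rule add.subgroupI)
    fix a b assume "a \<in> ideal_colon R I B" "b \<in> ideal_colon R I B"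
    then show "a \<oplus> b \<in> ideal_colon R I B"
      using assms by (auto simp: ideal_colon_def l_distr subsetD ideal.I_r_closed additive_subgroup.a_closed ideal.axioms(1))
  qed (use assms in \<open>auto simp: ideal_colon_def l_minus subsetD additive_subgroup.a_inv_closed
         additive_subgroup.zero_closed ideal.axioms(1)\<close>)
next
  fix a x assume a: "a \<in> ideal_colon R I B" and x: "x \<in> carrier R"
  then show "x \<otimes> a \<in> ideal_colon R I B"
    using assms by (auto simp: ideal_colon_def m_assoc subsetD ideal.I_l_closed)
  then show "a \<otimes> x \<in> ideal_colon R I B"
    using a x by (simp add: ideal_colon_def m_comm)
qed (rule ring_axioms)

lemma set_mult_subset_iff: "A <#> B \<subseteq> I \<longleftrightarrow> (\<forall>a\<in>A. \<forall>b\<in>B. a \<otimes> b \<in> I)"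
  unfolding set_mult_def by blast

lemma set_mult_subset_iff_colon:
  assumes "A \<subseteq> carrier R"
  shows "A <#> B \<subseteq> I \<longleftrightarrow> A \<subseteq> ideal_colon R I B"
  using assms unfolding set_mult_subset_iff ideal_colon_def by blast

lemma set_mult_subset_iff_colon':
  assumes "A \<subseteq> carrier R" "B \<subseteq> carrier R"
  shows "A <#> B \<subseteq> I \<longleftrightarrow> B \<subseteq> ideal_colon R I A"
proof -
  have "(\<forall>a\<in>A. \<forall>b\<in>B. a \<otimes> b \<in> I) \<longleftrightarrow> (\<forall>b\<in>B. \<forall>a\<in>A. b \<otimes> a \<in> I)"
    using assms by (metis m_comm subsetD)
  then show ?thesis
    using assms(2) unfolding set_mult_subset_iff ideal_colon_def by blast
qed

lemma ideal_prod_subset_iff: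
  assumes "ideal I R" "ideal J R" "ideal K R"
  shows "I \<cdot> J \<subseteq> K \<longleftrightarrow> I <#> J \<subseteq> K"
proof
  have "I <#> J \<subseteq> carrier R"
    using assms(1,2) by (intro set_mult_closed) (auto dest: ideal.Icarr)
  then have "I <#> J \<subseteq> I \<cdot> J"
    unfolding ideal_prod_eq_genideal[OF assms(1,2)] by (rule genideal_self)
  then show "I \<cdot> J \<subseteq> K \<Longrightarrow> I <#> J \<subseteq> K"
    by (rule order_trans)
next
  show "I <#> J \<subseteq> K \<Longrightarrow> I \<cdot> J \<subseteq> K"
    unfolding ideal_prod_eq_genideal[OF assms(1,2)] by (rule genideal_minimal[OF assms(3)])
qed

lemma finprods_in_carrier:
  assumes "\<forall>i\<in>T. S i \<subseteq> carrier R"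
  shows "finprods R S T \<subseteq> carrier R"
  using assms by (auto simp: finprods_def intro!: finprod_closed)

lemma finprods_cong:
  assumes "\<forall>i\<in>T. S i = S' i"
  shows "finprods R S T = finprods R S' T"
  using assms unfolding finprods_def by auto

lemma finprods_mono:
  assumes "\<forall>i\<in>T. S i \<subseteq> S' i"
  shows "finprods R S T \<subseteq> finprods R S' T"
  using assms unfolding finprods_def by blast

lemma finprods_singletons:
  assumes "\<forall>i\<in>T. S i = {x i}" "x \<in> T \<rightarrow> carrier R"
  shows "finprods R S T = {finprod R x T}"
proof -
  have "finprod R y T = finprod R x T" if "\<forall>i\<in>T. y i \<in> S i" for y
  proof (rule finprod_cong'[OF refl assms(2)])
    show "y i = x i" if "i \<in> T" for i
      using that \<open>\<forall>i\<in>T. y i \<in> S i\<close> assms(1) by blast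
  qed
  then have "finprods R S T \<subseteq> {finprod R x T}"
    unfolding finprods_def by blast
  moreover have "finprod R x T \<in> finprods R S T"
    using assms(1) unfolding finprods_def by blast
  ultimately show ?thesis
    by blast
qed

lemma finprods_insert:
  assumes "finite T" "i \<notin> T" "\<forall>j\<in>insert i T. S j \<subseteq> carrier R"
  shows "finprods R S (insert i T) = S i <#> finprods R S T"
proof
  show "finprods R S (insert i T) \<subseteq> S i <#> finprods R S T"
  proof
    fix p assume "p \<in> finprods R S (insert i T)"
    then obtain y where y: "\<forall>j\<in>insert i T. y j \<in> S j" and p: "p = finprod R y (insert i T)"
      unfolding finprods_def by blast
    have "y \<in> insert i T \<rightarrow> carrier R"
      using y assms(3) unfolding Pi_iff by blast
    then have "p = y i \<otimes> finprod R y T"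
      using p assms(1,2) by simp
    moreover have "finprod R y T \<in> finprods R S T"
      using y unfolding finprods_def by blast
    ultimately show "p \<in> S i <#> finprods R S T"
      using y unfolding set_mult_def by blast
  qed
next
  show "S i <#> finprods R S T \<subseteq> finprods R S (insert i T)"
  proof
    fix p assume "p \<in> S i <#> finprods R S T"
    then obtain a b where a: "a \<in> S i" and b: "b \<in> finprods R S T" and p: "p = a \<otimes> b"
      unfolding set_mult_def by blast
    from b obtain y where y: "\<forall>j\<in>T. y j \<in> S j" and b: "b = finprod R y T"
      unfolding finprods_def by blast
    let ?z = "y(i := a)"
    have y_carr: "y \<in> T \<rightarrow> carrier R"
      using y assms(3) unfolding Pi_iff by blast
    have "finprod R ?z (insert i T) = ?z i \<otimes> finprod R ?z T"
      using a y_carr assms by (intro finprod_insert) (auto simp: Pi_iff)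
    also have "finprod R ?z T = finprod R y T"
      using y_carr assms(2) by (intro finprod_cong') auto
    finally have "finprod R ?z (insert i T) = p"
      using p b by (simp only: fun_upd_same)
    moreover have "\<forall>j\<in>insert i T. ?z j \<in> S j"
      using a y by simp
    ultimately show "p \<in> finprods R S (insert i T)"
      unfolding finprods_def by blast
  qed
qed

lemma ideal_prod_list_ideal:
  assumes "\<forall>J\<in>set Js. ideal J R"
  shows "ideal (ideal_prod_list R Js) R"
  using assms by (induction Js) (auto simp: oneideal ideal_prod_is_ideal)

lemma ideal_prod_list_subset_iff:
  assumes "distinct L" "\<forall>i\<in>set L. ideal (Is i) R" "ideal K R"
  shows "ideal_prod_list R (map Is L) \<subseteq> K \<longleftrightarrow> finprods R Is (set L) \<subseteq> K"
  using assms
proof (induction L arbitrary: K)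
  case Nil
  have "finprods R Is (set []) = {\<one>}"
    by (simp add: finprods_def)
  moreover have "carrier R \<subseteq> K \<longleftrightarrow> \<one> \<in> K"
    using ideal.one_imp_carrier[OF Nil.prems(3)] by blast
  ultimately show ?case
    by simp
next
  case (Cons i L)
  let ?P = "ideal_prod_list R (map Is L)"
  have Is_i: "ideal (Is i) R" and Is_L: "\<forall>j\<in>set L. ideal (Is j) R"
    using Cons.prems(2) by simp_all
  have P: "ideal ?P R"
    using Is_L by (intro ideal_prod_list_ideal) simp
  have Is_i_carr: "Is i \<subseteq> carrier R" and P_carr: "?P \<subseteq> carrier R"
    using ideal.Icarr[OF Is_i] ideal.Icarr[OF P] by blast+
  have Is_L_carr: "\<forall>j\<in>set L. Is j \<subseteq> carrier R"
    using Is_L by (auto dest: ideal.Icarr)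
  then have L_carr: "finprods R Is (set L) \<subseteq> carrier R"
    by (rule finprods_in_carrier)
  have "ideal_prod_list R (map Is (i # L)) \<subseteq> K \<longleftrightarrow> Is i <#> ?P \<subseteq> K"
    using ideal_prod_subset_iff[OF Is_i P Cons.prems(3)] by simp
  also have "\<dots> \<longleftrightarrow> ?P \<subseteq> ideal_colon R K (Is i)"
    by (rule set_mult_subset_iff_colon'[OF Is_i_carr P_carr])
  also have "\<dots> \<longleftrightarrow> finprods R Is (set L) \<subseteq> ideal_colon R K (Is i)"
    using Cons.prems(1) Is_L ideal_colon_ideal[OF Cons.prems(3) Is_i_carr] by (intro Cons.IH) simp_all
  also have "\<dots> \<longleftrightarrow> Is i <#> finprods R Is (set L) \<subseteq> K"
    by (rule set_mult_subset_iff_colon'[OF Is_i_carr L_carr, symmetric])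
  also have "\<dots> \<longleftrightarrow> finprods R Is (set (i # L)) \<subseteq> K"
    using Cons.prems(1) Is_i_carr Is_L_carr by (simp add: finprods_insert)
  finally show ?case .
qed

lemma finprods_split_off:
  assumes "finite N" "k \<in> N" "j \<noteq> k" "\<forall>i\<in>N. S' i \<subseteq> carrier R" "\<forall>i\<in>N - {k}. S' i = S i"
  shows "finprods R S' (N - {j}) = S' k <#> finprods R S (N - {j} - {k})"
proof -
  have "N - {j} = insert k (N - {j} - {k})"
    using assms(2,3) by blast
  moreover have "finprods R S' (insert k (N - {j} - {k})) = S' k <#> finprods R S' (N - {j} - {k})"
    using assms(1,2,4) by (intro finprods_insert) auto
  ultimately have "finprods R S' (N - {j}) = S' k <#> finprods R S' (N - {j} - {k})"
    by simp
  also have "finprods R S' (N - {j} - {k}) = finprods R S (N - {j} - {k})"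
    using assms(5) by (intro finprods_cong) blast
  finally show ?thesis .
qed

lemma u_ideal_uniform_dropped_index:
  assumes I: "ideal I R" and N: "finite N" "k \<in> N"
    and carr: "\<forall>i\<in>N. S i \<subseteq> carrier R"
    and u: "u_ideal R (S k)"
    and elementwise: "\<forall>a\<in>S k. \<exists>j\<in>N. finprods R (S(k := {a})) (N - {j}) \<subseteq> I"
  shows "\<exists>j\<in>N. finprods R S (N - {j}) \<subseteq> I"
proof (cases "finprods R S (N - {k}) \<subseteq> I")
  case True
  then show ?thesis
    using N by blast
next
  case False
  define C where "C j = ideal_colon R I (finprods R S (N - {j} - {k}))" for j
  have C_ideal: "ideal (C j) R" for j
    unfolding C_def using I carr by (intro ideal_colon_ideal finprods_in_carrier) auto
  have "S k \<subseteq> \<Union> (C ` (N - {k}))"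
  proof
    fix a assume a: "a \<in> S k"
    then obtain j where j: "j \<in> N" "finprods R (S(k := {a})) (N - {j}) \<subseteq> I"
      using elementwise by blast
    have "finprods R (S(k := {a})) (N - {k}) = finprods R S (N - {k})"
      by (intro finprods_cong) simp
    then have "j \<noteq> k"
      using False j(2) by force
    moreover have "finprods R (S(k := {a})) (N - {j}) = {a} <#> finprods R S (N - {j} - {k})"
      using N \<open>j \<noteq> k\<close> carr a by (subst finprods_split_off) auto
    then have "{a} <#> finprods R S (N - {j} - {k}) \<subseteq> I"
      using j(2) by simp
    then have "a \<in> C j"
      unfolding C_def using a carr N(2) by (subst (asm) set_mult_subset_iff_colon) auto
    ultimately show "a \<in> \<Union> (C ` (N - {k}))"
      using j(1) by blast
  qed
  moreover have "finite (C ` (N - {k}))" "\<forall>K\<in>C ` (N - {k}). ideal K R"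
    using N(1) C_ideal by auto
  ultimately obtain j where j: "j \<in> N - {k}" "S k \<subseteq> C j"
    using u unfolding u_ideal_def by blast
  have "finprods R S (N - {j}) = S k <#> finprods R S (N - {j} - {k})"
    using N j(1) carr by (intro finprods_split_off) auto
  also have "\<dots> \<subseteq> I"
    using j(2) carr N(2) unfolding C_def by (subst set_mult_subset_iff_colon) auto
  finally show ?thesis
    using j(1) by blast
qed

lemma n_absorbing_singletons:
  assumes absorbing: "n_absorbing R n I"
    and singletons: "\<forall>i<Suc n. \<exists>c\<in>carrier R. S i = {c}"
    and "finprods R S {..<Suc n} \<subseteq> I"
  shows "\<exists>j<Suc n. finprods R S ({..<Suc n} - {j}) \<subseteq> I"
proof -
  obtain x where x: "\<forall>i<Suc n. x i \<in> carrier R \<and> S i = {x i}"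
    using singletons by metis
  have finprods_x: "finprods R S T = {finprod R x T}" if "T \<subseteq> {..<Suc n}" for T
  proof (rule finprods_singletons)
    show "\<forall>i\<in>T. S i = {x i}" "x \<in> T \<rightarrow> carrier R"
      using that x unfolding Pi_iff by auto
  qed
  have "finprod R x {..<Suc n} \<in> I"
    using assms(3) finprods_x[of "{..<Suc n}"] by simp
  moreover have "\<forall>i<Suc n. x i \<in> carrier R"
    using x by simp
  ultimately obtain j where "j < Suc n" "finprod R x ({..<Suc n} - {j}) \<in> I"
    using absorbing unfolding n_absorbing_def by blast
  then show ?thesis
    using finprods_x[of "{..<Suc n} - {j}"] by auto
qed

lemma n_absorbing_finprods:
  assumes absorbing: "n_absorbing R n I"
    and "A \<subseteq> {..<Suc n}"
    and "\<forall>i\<in>A. u_ideal R (S i)"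
    and "\<forall>i\<in>{..<Suc n} - A. \<exists>c\<in>carrier R. S i = {c}"
    and "finprods R S {..<Suc n} \<subseteq> I"
  shows "\<exists>j<Suc n. finprods R S ({..<Suc n} - {j}) \<subseteq> I"
proof -
  have "finite A"
    using assms(2) finite_subset by blast
  then show ?thesis
    using assms(2-5)
  proof (induction A arbitrary: S)
    case empty
    then show ?case
      by (intro n_absorbing_singletons[OF absorbing]) simp_all
  next
    case (insert k A)
    have I: "ideal I R"
      using absorbing unfolding n_absorbing_def by blast
    have k: "k \<in> {..<Suc n}" and u_k: "u_ideal R (S k)"
      using insert.prems(1,2) by simp_all
    have carr: "\<forall>i\<in>{..<Suc n}. S i \<subseteq> carrier R"
    proof
      fix i assume i: "i \<in> {..<Suc n}"
      show "S i \<subseteq> carrier R"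
      proof (cases "i \<in> insert k A")
        case True
        then have "ideal (S i) R"
          using insert.prems(2) unfolding u_ideal_def by blast
        then show ?thesis
          by (auto dest: ideal.Icarr)
      next
        case False
        then obtain c where "c \<in> carrier R" "S i = {c}"
          using insert.prems(3) i by blast
        then show ?thesis
          by simp
      qed
    qed
    have "\<exists>j\<in>{..<Suc n}. finprods R (S(k := {a})) ({..<Suc n} - {j}) \<subseteq> I" if a: "a \<in> S k" for a
    proof -
      have a_carr: "a \<in> carrier R"
        using a k carr by (auto simp del: lessThan_iff)
      have "\<exists>j<Suc n. finprods R (S(k := {a})) ({..<Suc n} - {j}) \<subseteq> I"
      proof (rule insert.IH)
        show "A \<subseteq> {..<Suc n}"
          using insert.prems(1) by simp
        show "\<forall>i\<in>A. u_ideal R ((S(k := {a})) i)"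
          using insert.prems(2) insert.hyps(2) by auto
        show "\<forall>i\<in>{..<Suc n} - A. \<exists>c\<in>carrier R. (S(k := {a})) i = {c}"
          using insert.prems(3) a_carr by auto
        have "finprods R (S(k := {a})) {..<Suc n} \<subseteq> finprods R S {..<Suc n}"
          using a by (intro finprods_mono) simp
        then show "finprods R (S(k := {a})) {..<Suc n} \<subseteq> I"
          using insert.prems(4) by blast
      qed
      then show ?thesis
        by auto
    qed
    then have "\<exists>j\<in>{..<Suc n}. finprods R S ({..<Suc n} - {j}) \<subseteq> I"
      using u_ideal_uniform_dropped_index[OF I _ k carr u_k] by blast
    then show ?case
      by auto
  qed
qed

end

theorem lemma6:
  fixes R :: "('a, 'b) ring_scheme" and n :: nat and I :: "'a set" and Is :: "nat \<Rightarrow> 'a set"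
  assumes "cring R"
    and "\<one>\<^bsub>R\<^esub> \<noteq> \<zero>\<^bsub>R\<^esub>"
    and "n \<ge> 1"
    and "n_absorbing R n I"
    and "\<forall>i<Suc n. u_ideal R (Is i)"
    and "ideal_prod_list R (map Is [0..<Suc n]) \<subseteq> I"
  shows "\<exists>j<Suc n. ideal_prod_list R (map Is (remove1 j [0..<Suc n])) \<subseteq> I"
proof -
  interpret cring R by fact
  have I: "ideal I R"
    using assms(4) unfolding n_absorbing_def by blast
  have Is: "\<forall>i\<in>{..<Suc n}. ideal (Is i) R"
    using assms(5) unfolding u_ideal_def by blast
  have range: "set [0..<Suc n] = {..<Suc n}"
    by (simp only: set_upt atLeast0LessThan)
  have "finprods R Is {..<Suc n} \<subseteq> I"
    using ideal_prod_list_subset_iff[of "[0..<Suc n]" Is I] assms(6) Is I unfolding range by simp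
  then obtain j where j: "j < Suc n" "finprods R Is ({..<Suc n} - {j}) \<subseteq> I"
    using n_absorbing_finprods[OF assms(4), of "{..<Suc n}" Is] assms(5) by auto
  have "set (remove1 j [0..<Suc n]) = {..<Suc n} - {j}"
    using range by (simp only: set_remove1_eq distinct_upt)
  then have "ideal_prod_list R (map Is (remove1 j [0..<Suc n])) \<subseteq> I"
    using ideal_prod_list_subset_iff[of "remove1 j [0..<Suc n]" Is I] j(2) Is I by simp
  then show ?thesis
    using j(1) by blast
qed

end
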